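(* Let $\pi$ be an $(m,n)$-parking function with bird's eye permutation $\omega$. Then $\pi\circ\omega$ is the shifted parent map of a priority forest on $[n]_0$ with $m$ edges.
   Context: $[n]=\{1,\dots,n\}$, $[n]_0=\{0,\dots,n\}$. An $(m,n)$-parking function is a map $\pi:[m]\to[n]$ such that when cars $1,\dots,m$ arrive in this order to a street with spots $1,\dots,n$, and car $i$ parks at the first empty spot $\ge\pi(i)$, all $m$ cars park. Its bird's eye permutation $\omega:[n]\to[m]$ is the partial permutation sending each occupied spot to the car parked there (undefined at empty spots); $\pi\circ\omega$ is the partial function $[n]\to[n]$ defined on occupied spots. A priority forest on $[n]_0$ is a rooted forest with vertex set $[n]_0$ whose component trees $T_0,T_1,\dots$ are increasing (each non-root vertex has a larger label than its parent) and satisfy: for $j<k$ every label of $T_j$ is smaller than every label of $T_k$. Its shifted parent map is the partial function $s_P:[n]\to[n]$ given by $s_P(i)=p(i)+1$ for each non-root vertex $i$ with parent $p(i)$, and undefined at roots. *)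

theory Defs
  imports Main
begin

text \<open>Spots are 1..n, cars are 1..m; a preference map is a function nat => nat
 (only its values on 1..m matter).\<close>

definition can_park :: "nat \<Rightarrow> nat set \<Rightarrow> nat \<Rightarrow> bool" where
  "can_park n S a \<longleftrightarrow> (\<exists>s. a \<le> s \<and> s \<le> n \<and> s \<notin> S)"

definition park_spot :: "nat \<Rightarrow> nat set \<Rightarrow> nat \<Rightarrow> nat" where
  "park_spot n S a = (LEAST s. a \<le> s \<and> s \<le> n \<and> s \<notin> S)"

fun occupied :: "nat \<Rightarrow> (nat \<Rightarrow> nat) \<Rightarrow> nat \<Rightarrow> nat set" where
  "occupied n p 0 = {}"
| "occupied n p (Suc k) =
     (if can_park n (occupied n p k) (p (Suc k))
      then insert (park_spot n (occupied n p k) (p (Suc k))) (occupied n p k)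
      else occupied n p k)"

definition car_spot :: "nat \<Rightarrow> (nat \<Rightarrow> nat) \<Rightarrow> nat \<Rightarrow> nat" where
  "car_spot n p i = park_spot n (occupied n p (i - 1)) (p i)"

definition parking_function :: "nat \<Rightarrow> nat \<Rightarrow> (nat \<Rightarrow> nat) \<Rightarrow> bool" where
  "parking_function m n p \<longleftrightarrow>
     (\<forall>i\<in>{1..m}. p i \<in> {1..n}) \<and>
     (\<forall>i\<in>{1..m}. can_park n (occupied n p (i - 1)) (p i))"

text \<open>Bird's eye permutation as a partial map [n] -> [m].\<close>
definition birds_eye :: "nat \<Rightarrow> nat \<Rightarrow> (nat \<Rightarrow> nat) \<Rightarrow> nat \<Rightarrow> nat option" where
  "birds_eye m n p s =
     (if s \<in> {1..n} \<and> (\<exists>i\<in>{1..m}. car_spot n p i = s)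
      then Some (THE i. i \<in> {1..m} \<and> car_spot n p i = s) else None)"

text \<open>A rooted forest on {0..n} is given by its parent map par (None at roots
 and outside {0..n}).\<close>

definition parent_rel :: "(nat \<Rightarrow> nat option) \<Rightarrow> (nat \<times> nat) set" where
  "parent_rel par = {(i, q). par i = Some q}"

definition tree_of :: "nat \<Rightarrow> (nat \<Rightarrow> nat option) \<Rightarrow> nat \<Rightarrow> nat set" where
  "tree_of n par x = {y \<in> {0..n}. \<exists>r. (x, r) \<in> (parent_rel par)\<^sup>* \<and> (y, r) \<in> (parent_rel par)\<^sup>*}"

definition priority_forest :: "nat \<Rightarrow> (nat \<Rightarrow> nat option) \<Rightarrow> bool" where
  "priority_forest n par \<longleftrightarrow>
     (\<forall>i. par i \<noteq> None \<longrightarrow> i \<le> n) \<and>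
     (\<forall>i q. par i = Some q \<longrightarrow> q < i) \<and>
     (\<forall>x\<in>{0..n}. \<forall>y\<in>{0..n}. tree_of n par x \<noteq> tree_of n par y \<longrightarrow>
        (\<forall>u\<in>tree_of n par x. \<forall>v\<in>tree_of n par y. u < v) \<or>
        (\<forall>u\<in>tree_of n par x. \<forall>v\<in>tree_of n par y. v < u))"

definition num_edges :: "(nat \<Rightarrow> nat option) \<Rightarrow> nat" where
  "num_edges par = card {i. par i \<noteq> None}"

definition shifted_parent :: "nat \<Rightarrow> (nat \<Rightarrow> nat option) \<Rightarrow> nat \<Rightarrow> nat option" where
  "shifted_parent n par i = (if i \<in> {1..n} then map_option Suc (par i) else None)"

end

theory Submission
  imports Defs
begin

text \<open>Car \<open>i\<close> parks at the first free spot at or after \<open>\<pi>(i)\<close>, so every spot from \<open>\<pi>(i)\<close>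
  up to its own spot is occupied.  Hence the parent \<open>\<pi>(i) - 1\<close> of the spot of car \<open>i\<close> lies
  below it and the edge only jumps over occupied spots.  In such a forest the tree of a
  vertex \<open>y\<close> is determined by the largest empty spot \<open>\<le> y\<close> (spot 0 counting as empty):
  the trees are the intervals starting at consecutive empty spots, so they are increasing
  and linearly ordered.  There is one edge per car.\<close>

lemma car_spot_bounds:
  assumes "parking_function m n p" and "i \<in> {1..m}"
  shows "p i \<le> car_spot n p i" and "car_spot n p i \<le> n"
    and "car_spot n p i \<notin> occupied n p (i - 1)"
proof -
  have "\<exists>s. p i \<le> s \<and> s \<le> n \<and> s \<notin> occupied n p (i - 1)"
    using assms unfolding parking_function_def can_park_def by blast
  from LeastI_ex[OF this]
  show "p i \<le> car_spot n p i" "car_spot n p i \<le> n" "car_spot n p i \<notin> occupied n p (i - 1)"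
    unfolding car_spot_def park_spot_def by blast+
qed

lemma occupied_before_car_spot:
  assumes "parking_function m n p" and "i \<in> {1..m}" and "p i \<le> t" and "t < car_spot n p i"
  shows "t \<in> occupied n p (i - 1)"
proof -
  have "t \<le> n" using car_spot_bounds[OF assms(1,2)] assms(4) by simp
  with assms(3,4) show ?thesis
    unfolding car_spot_def park_spot_def using not_less_Least by blast
qed

lemma occupied_eq_car_spot_image:
  assumes "parking_function m n p" and "k \<le> m"
  shows "occupied n p k = car_spot n p ` {1..k}"
  using assms(2)
proof (induction k)
  case 0
  then show ?case by simp
next
  case (Suc k)
  have "can_park n (occupied n p k) (p (Suc k))"
    using assms(1) Suc.prems unfolding parking_function_def by force
  then have "occupied n p (Suc k) = insert (car_spot n p (Suc k)) (occupied n p k)"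
    by (simp add: car_spot_def)
  then show ?case using Suc by (auto simp: atLeastAtMostSuc_conv)
qed

lemma inj_on_car_spot:
  assumes "parking_function m n p"
  shows "inj_on (car_spot n p) {1..m}"
proof -
  have "car_spot n p i \<noteq> car_spot n p j" if "i < j" "i \<in> {1..m}" "j \<in> {1..m}" for i j
  proof -
    have "car_spot n p i \<in> occupied n p (j - 1)"
      using occupied_eq_car_spot_image[OF assms, of "j - 1"] that by auto
    then show ?thesis using car_spot_bounds(3)[OF assms that(3)] by auto
  qed
  then show ?thesis unfolding inj_on_def by (metis linorder_neqE_nat)
qed

lemma birds_eye_car_spot:
  assumes "parking_function m n p" and "i \<in> {1..m}"
  shows "birds_eye m n p (car_spot n p i) = Some i"
proof -
  have "car_spot n p i \<in> {1..n}"
    using car_spot_bounds[OF assms] assms unfolding parking_function_def by force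
  moreover have "(THE j. j \<in> {1..m} \<and> car_spot n p j = car_spot n p i) = i"
    using assms(2) inj_on_car_spot[OF assms(1)] unfolding inj_on_def by blast
  ultimately show ?thesis using assms(2) unfolding birds_eye_def by auto
qed

lemma birds_eye_eq_None:
  "s \<notin> car_spot n p ` {1..m} \<Longrightarrow> birds_eye m n p s = None"
  unfolding birds_eye_def by auto

locale block_forest =
  fixes n :: nat and A :: "nat set" and par :: "nat \<Rightarrow> nat option"
  assumes nonroots_subset: "A \<subseteq> {1..n}"
    and par_defined_iff: "par i \<noteq> None \<longleftrightarrow> i \<in> A"
    and par_less: "par i = Some q \<Longrightarrow> q < i"
    and par_jumps_nonroots: "par i = Some q \<Longrightarrow> {q<..i} \<subseteq> A"
begin

definition root :: "nat \<Rightarrow> nat" where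
  "root y = Max {z. z \<le> y \<and> z \<notin> A}"

lemma root_mem: "root y \<in> {z. z \<le> y \<and> z \<notin> A}"
proof -
  have "0 \<in> {z. z \<le> y \<and> z \<notin> A}" using nonroots_subset by auto
  then show ?thesis unfolding root_def by (intro Max_in) auto
qed

lemma root_eq_self: "y \<notin> A \<Longrightarrow> root y = y"
  unfolding root_def by (intro Max_eqI) auto

lemma root_mono:
  assumes "u \<le> v"
  shows "root u \<le> root v"
proof -
  have "{z. z \<le> u \<and> z \<notin> A} \<subseteq> {z. z \<le> v \<and> z \<notin> A}" using assms by auto
  moreover have "{z. z \<le> u \<and> z \<notin> A} \<noteq> {}" using root_mem[of u] by blast
  ultimately show ?thesis unfolding root_def by (intro Max_mono) auto
qed

lemma root_par:
  assumes "par s = Some q"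
  shows "root q = root s"
proof -
  have "q < s" "{q<..s} \<subseteq> A"
    using par_less[OF assms] par_jumps_nonroots[OF assms] by auto
  then have "{z. z \<le> q \<and> z \<notin> A} = {z. z \<le> s \<and> z \<notin> A}"
    by (auto simp: subset_eq)
  then show ?thesis unfolding root_def by simp
qed

lemma rtrancl_to_root: "(y, root y) \<in> (parent_rel par)\<^sup>*"
proof (induction y rule: less_induct)
  case (less y)
  show ?case
  proof (cases "y \<in> A")
    case False
    then show ?thesis using root_eq_self by simp
  next
    case True
    then obtain q where q: "par y = Some q" using par_defined_iff by auto
    then have "(y, q) \<in> parent_rel par" unfolding parent_rel_def by simp
    moreover have "(q, root q) \<in> (parent_rel par)\<^sup>*" using less par_less[OF q] by blast
    ultimately show ?thesis using root_par[OF q] by simp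
  qed
qed

lemma root_rtrancl_eq: "(y, z) \<in> (parent_rel par)\<^sup>* \<Longrightarrow> root z = root y"
proof (induction rule: rtrancl_induct)
  case base
  then show ?case by simp
next
  case (step z z')
  then show ?case using root_par unfolding parent_rel_def by fastforce
qed

lemma tree_of_eq: "tree_of n par x = {y \<in> {0..n}. root y = root x}"
  unfolding tree_of_def
proof (intro Collect_cong conj_cong refl iffI)
  fix y assume "\<exists>r. (x, r) \<in> (parent_rel par)\<^sup>* \<and> (y, r) \<in> (parent_rel par)\<^sup>*"
  then show "root y = root x" using root_rtrancl_eq by metis
next
  fix y assume "root y = root x"
  then show "\<exists>r. (x, r) \<in> (parent_rel par)\<^sup>* \<and> (y, r) \<in> (parent_rel par)\<^sup>*"
    using rtrancl_to_root by metis
qed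

lemma priority_forest: "priority_forest n par"
  unfolding priority_forest_def
proof (intro conjI allI impI ballI)
  fix i assume "par i \<noteq> None"
  then show "i \<le> n" using par_defined_iff nonroots_subset by auto
next
  fix i q assume "par i = Some q"
  then show "q < i" by (rule par_less)
next
  fix x y assume "tree_of n par x \<noteq> tree_of n par y"
  then have "root x < root y \<or> root y < root x" unfolding tree_of_eq by auto
  moreover have "u < v" if "root u < root v" for u v
    using root_mono[of v u] that by linarith
  ultimately show "(\<forall>u\<in>tree_of n par x. \<forall>v\<in>tree_of n par y. u < v) \<or>
      (\<forall>u\<in>tree_of n par x. \<forall>v\<in>tree_of n par y. v < u)"
    unfolding tree_of_eq by auto
qed

end

definition parking_parent :: "nat \<Rightarrow> nat \<Rightarrow> (nat \<Rightarrow> nat) \<Rightarrow> nat \<Rightarrow> nat option" where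
  "parking_parent m n p s = map_option (\<lambda>i. p i - 1) (birds_eye m n p s)"

lemma parking_parent_car_spot:
  assumes "parking_function m n p" and "i \<in> {1..m}"
  shows "parking_parent m n p (car_spot n p i) = Some (p i - 1)"
  using birds_eye_car_spot[OF assms] by (simp add: parking_parent_def)

lemma block_forest_parking_parent:
  assumes pf: "parking_function m n p"
  shows "block_forest n (car_spot n p ` {1..m}) (parking_parent m n p)"
proof
  show "car_spot n p ` {1..m} \<subseteq> {1..n}"
    using car_spot_bounds[OF pf] pf unfolding parking_function_def by force
next
  fix s
  show "parking_parent m n p s \<noteq> None \<longleftrightarrow> s \<in> car_spot n p ` {1..m}"
  proof
    assume "parking_parent m n p s \<noteq> None"
    then show "s \<in> car_spot n p ` {1..m}"
      using birds_eye_eq_None[of s n p m] unfolding parking_parent_def by (metis option.map_disc_iff)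
  next
    assume "s \<in> car_spot n p ` {1..m}"
    then show "parking_parent m n p s \<noteq> None" using parking_parent_car_spot[OF pf] by auto
  qed
next
  fix s q assume par: "parking_parent m n p s = Some q"
  then obtain i where i: "i \<in> {1..m}" "s = car_spot n p i"
    using birds_eye_eq_None by (fastforce simp: parking_parent_def)
  have q: "q = p i - 1" using par parking_parent_car_spot[OF pf i(1)] i(2) by simp
  have pref: "1 \<le> p i" "p i \<le> s"
    using pf i car_spot_bounds(1)[OF pf i(1)] unfolding parking_function_def by auto
  then show "q < s" using q by simp
  have "t \<in> car_spot n p ` {1..m}" if "p i \<le> t" "t \<le> s" for t
  proof (cases "t = s")
    case False
    then have "t \<in> occupied n p (i - 1)"
      using occupied_before_car_spot[OF pf i(1)] that i(2) by simp
    then show ?thesis using occupied_eq_car_spot_image[OF pf, of "i - 1"] i(1) by auto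
  qed (use i in auto)
  then show "{q<..s} \<subseteq> car_spot n p ` {1..m}" using q pref by auto
qed

theorem lemma4p1:
  fixes m n :: nat and p :: "nat \<Rightarrow> nat" and \<omega> :: "nat \<Rightarrow> nat option"
  assumes "parking_function m n p"
    and "\<omega> = birds_eye m n p"
  shows "\<exists>par. priority_forest n par \<and> num_edges par = m \<and>
           shifted_parent n par = (\<lambda>s. map_option p (\<omega> s))"
proof (intro exI conjI)
  let ?A = "car_spot n p ` {1..m}"
  interpret block_forest n ?A "parking_parent m n p"
    using block_forest_parking_parent[OF assms(1)] .
  show "priority_forest n (parking_parent m n p)"
    by (rule priority_forest)
  have "{i. parking_parent m n p i \<noteq> None} = ?A"
    using par_defined_iff by auto
  then show "num_edges (parking_parent m n p) = m"
    using card_image[OF inj_on_car_spot[OF assms(1)]] by (simp add: num_edges_def)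
  have "shifted_parent n (parking_parent m n p) s = map_option p (\<omega> s)" for s
  proof (cases "s \<in> ?A")
    case True
    then obtain i where i: "i \<in> {1..m}" "s = car_spot n p i" by auto
    have "1 \<le> p i" using assms(1) i(1) unfolding parking_function_def by auto
    moreover have "s \<in> {1..n}" using True nonroots_subset by blast
    ultimately show ?thesis
      using i parking_parent_car_spot[OF assms(1)] birds_eye_car_spot[OF assms(1)]
      by (simp add: shifted_parent_def assms(2))
  next
    case False
    then have "parking_parent m n p s = None" using par_defined_iff by blast
    then show ?thesis using False birds_eye_eq_None by (simp add: shifted_parent_def assms(2))
  qed
  then show "shifted_parent n (parking_parent m n p) = (\<lambda>s. map_option p (\<omega> s))" ..
qed

end
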